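(* Let $\nu$ be a probability measure on $\mathrm{U}(d)$ which is an exact unitary $t$-design. Let $\Phi\in\mathcal{H}_t$ satisfy $\int_{\mathcal{U}(d)}\mathrm{d}\mu(\mathcal{U})\,\Phi(\mathcal{U})=1$. Then for every $V\in\mathrm{U}(d)$ and every $\epsilon\in[0,2]$, $$\int_{B(\mathcal{V},\epsilon)}\mathrm{d}\mu(\mathcal{U})\,(T_\nu\Phi)(\mathcal{U})=\mathrm{vol}(B(\mathcal{V},\epsilon)).$$
   Context: $\mathcal{U}(d)$ is the set of unitary channels on $\mathbb{C}^d$ (functions on it = phase-invariant functions on $\mathrm{U}(d)$); $\mu$ is the Haar probability measure and $\mathrm{vol}=\mu$. $\mathrm{D}(\mathcal{U},\mathcal{V})=\min_\varphi\|U-e^{i\varphi}V\|_\infty$ and $B(\mathcal{V},\epsilon)=\{\mathcal{U}:\mathrm{D}(\mathcal{U},\mathcal{V})\le\epsilon\}$. $\mathcal{H}_t$ is the span of functions $U\mapsto\mathrm{tr}(A\,U^{\otimes s}\otimes\bar U^{\otimes s})$, $0\le s\le t$. $(T_\nu\Phi)(U)=\int\mathrm{d}\nu(V)\,\Phi(V^{-1}U)$. $\nu$ is an exact $t$-design if $\int\mathrm{d}\nu\,G=\int\mathrm{d}\mu\,G$ for all $G(U)=\mathrm{tr}(A\,U^{\otimes t}\otimes\bar U^{\otimes t})$. *)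

theory Defs
  imports "HOL-Probability.Probability" "HOL-Library.Function_Algebras"
begin

text \<open>Matrices in M_d(C) are represented as complex^'d^'d, with the dimension d = CARD('d).\<close>

definition adjoint_mat :: "complex^'d^'d \<Rightarrow> complex^'d^'d" where
  "adjoint_mat U = (\<chi> i j. cnj (U $ j $ i))"

definition unitary_group :: "(complex^'d::finite^'d) set" where
  "unitary_group = {U. adjoint_mat U ** U = mat 1}"

definition op_norm :: "complex^'d::finite^'d \<Rightarrow> real" where
  "op_norm M = onorm (\<lambda>x. M *v x)"

text \<open>Distance between unitary channels: min over global phases.\<close>
definition chan_dist :: "complex^'d::finite^'d \<Rightarrow> complex^'d^'d \<Rightarrow> real" where
  "chan_dist U V = (INF \<phi>::real. op_norm (U - (\<chi> i j. cis \<phi> * V $ i $ j)))"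

definition chan_ball :: "complex^'d::finite^'d \<Rightarrow> real \<Rightarrow> (complex^'d^'d) set" where
  "chan_ball V \<epsilon> = {U \<in> unitary_group. chan_dist U V \<le> \<epsilon>}"

definition haar_measure :: "(complex^'d::finite^'d) measure \<Rightarrow> bool" where
  "haar_measure \<mu> \<longleftrightarrow> prob_space \<mu> \<and> sets \<mu> = sets borel \<and> emeasure \<mu> unitary_group = 1 \<and>
     (\<forall>V\<in>unitary_group. distr \<mu> borel (\<lambda>U. V ** U) = \<mu>)"

definition prob_on_unitary :: "(complex^'d::finite^'d) measure \<Rightarrow> bool" where
  "prob_on_unitary \<nu> \<longleftrightarrow> prob_space \<nu> \<and> sets \<nu> = sets borel \<and> emeasure \<nu> unitary_group = 1"

text \<open>Multi-indices of length s (indexing the tensor power (C^d)^{\<otimes>s}).\<close>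
definition multi_idx :: "nat \<Rightarrow> (nat \<Rightarrow> 'd) set" where
  "multi_idx s = {0..<s} \<rightarrow>\<^sub>E UNIV"

text \<open>Entry (I,J) of U^{\<otimes>s}.\<close>
definition tens_entry :: "nat \<Rightarrow> complex^'d^'d \<Rightarrow> (nat \<Rightarrow> 'd) \<Rightarrow> (nat \<Rightarrow> 'd) \<Rightarrow> complex" where
  "tens_entry s U I J = (\<Prod>m<s. U $ I m $ J m)"

text \<open>tr(A (U^{\<otimes>s} \<otimes> conj(U)^{\<otimes>s})), where A is a matrix indexed by pairs of multi-indices;
  the entry ((I,K),(J,L)) of U^{\<otimes>s} \<otimes> conj(U)^{\<otimes>s} is (U^{\<otimes>s})_{IJ} * conj((U^{\<otimes>s})_{KL}).\<close>
definition tr_tensor ::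
  "nat \<Rightarrow> ((nat \<Rightarrow> 'd::finite) \<times> (nat \<Rightarrow> 'd) \<Rightarrow> (nat \<Rightarrow> 'd) \<times> (nat \<Rightarrow> 'd) \<Rightarrow> complex)
     \<Rightarrow> complex^'d^'d \<Rightarrow> complex" where
  "tr_tensor s A U = (\<Sum>I\<in>multi_idx s. \<Sum>K\<in>multi_idx s. \<Sum>J\<in>multi_idx s. \<Sum>L\<in>multi_idx s.
      A (J, L) (I, K) * (tens_entry s U I J * cnj (tens_entry s U K L)))"

definition H_space :: "nat \<Rightarrow> (complex^'d::finite^'d \<Rightarrow> complex) set" where
  "H_space t = module.span (\<lambda>c f. (\<lambda>U. c * f U))
      {G. \<exists>s A. s \<le> t \<and> G = tr_tensor s A}"

definition exact_design :: "nat \<Rightarrow> (complex^'d::finite^'d) measure \<Rightarrow> (complex^'d^'d) measure \<Rightarrow> bool" where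
  "exact_design t \<mu> \<nu> \<longleftrightarrow>
     (\<forall>A. integral\<^sup>L \<nu> (tr_tensor t A) = integral\<^sup>L \<mu> (tr_tensor t A))"

definition T_op :: "(complex^'d::finite^'d) measure \<Rightarrow> (complex^'d^'d \<Rightarrow> complex) \<Rightarrow> complex^'d^'d \<Rightarrow> complex" where
  "T_op \<nu> \<Phi> U = (\<integral>V. \<Phi> (matrix_inv V ** U) \<partial>\<nu>)"

end

theory Submission
  imports Defs
begin

(*
  For unitary U the function V \<mapsto> \<Phi>(V^* U) is again a polynomial of degree at most t in the
  entries of V and their conjugates. Since the columns of a unitary V have norm 1, every such
  polynomial agrees on U(d) with one of the form tr(B V^{\<otimes>t} \<otimes> conj(V)^{\<otimes>t}), which the
  t-design \<nu> integrates exactly as the Haar measure \<mu> does. Hence (T_\<nu>\<Phi>)(U) equals the Haar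
  average of V \<mapsto> \<Phi>(V^* U). Only left invariance of \<mu> is assumed, so this average is computed
  by Fubini: as a function of U it is constant by left invariance, while its average over U is
  \<integral>\<Phi> d\<mu> = 1, again by left invariance. So T_\<nu>\<Phi> = 1 on U(d), and its integral over any ball
  is the volume of the ball.
*)

lemma adjoint_mat_nth [simp]: "adjoint_mat U $ i $ j = cnj (U $ j $ i)"
  by (simp add: adjoint_mat_def)

lemma adjoint_mat_adjoint_mat [simp]: "adjoint_mat (adjoint_mat U) = U"
  by (simp add: vec_eq_iff)

lemma adjoint_mat_mult:
  "adjoint_mat (A ** B) = adjoint_mat B ** adjoint_mat (A :: complex^'n::finite^'n)"
  by (simp add: vec_eq_iff matrix_matrix_mult_def mult.commute)

lemma unitary_group_iff: "U \<in> unitary_group \<longleftrightarrow> adjoint_mat U ** U = mat 1"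
  by (simp add: unitary_group_def)

lemma unitary_mult_adjoint_mat: "U \<in> unitary_group \<Longrightarrow> U ** adjoint_mat U = mat 1"
  by (simp add: unitary_group_iff matrix_left_right_inverse)

lemma adjoint_mat_unitary: "U \<in> unitary_group \<Longrightarrow> adjoint_mat U \<in> unitary_group"
  using unitary_mult_adjoint_mat by (simp add: unitary_group_iff)

lemma unitary_column_sum:
  assumes "U \<in> unitary_group"
  shows "(\<Sum>k\<in>UNIV. cnj (U $ k $ j) * U $ k $ j) = 1"
proof -
  have "(adjoint_mat U ** U) $ j $ j = 1"
    using assms by (simp add: unitary_group_iff mat_def)
  then show ?thesis
    by (simp add: matrix_matrix_mult_def)
qed

lemma norm_unitary_entry_le_1:
  assumes "U \<in> unitary_group"
  shows "norm (U $ i $ j) \<le> 1"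
proof -
  have "complex_of_real (\<Sum>k\<in>UNIV. (norm (U $ k $ j))\<^sup>2) = (\<Sum>k\<in>UNIV. cnj (U $ k $ j) * U $ k $ j)"
    by (simp only: of_real_sum complex_norm_square[symmetric] mult.commute)
  then have "(\<Sum>k\<in>UNIV. (norm (U $ k $ j))\<^sup>2) = 1"
    using unitary_column_sum[OF assms] by (metis of_real_eq_1_iff)
  moreover have "(norm (U $ i $ j))\<^sup>2 \<le> (\<Sum>k\<in>UNIV. (norm (U $ k $ j))\<^sup>2)"
    by (rule member_le_sum) auto
  ultimately show ?thesis
    by (simp add: power_le_one_iff abs_le_square_iff)
qed

lemma closed_unitary_group: "closed unitary_group"
proof -
  have "unitary_group =
      (\<Inter>i. \<Inter>j. {U. (\<Sum>k\<in>UNIV. cnj (U $ k $ i) * U $ k $ j) = mat 1 $ i $ j})"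
    by (auto simp: unitary_group_iff vec_eq_iff matrix_matrix_mult_def)
  also have "closed \<dots>"
    by (intro closed_INT ballI closed_Collect_eq continuous_intros)
  finally show ?thesis .
qed

lemma bounded_unitary_group: "bounded (unitary_group :: (complex^'n::finite^'n) set)"
proof -
  have "norm U \<le> real (CARD('n) * CARD('n))" if "U \<in> unitary_group" for U :: "complex^'n^'n"
  proof -
    have "norm U \<le> (\<Sum>i\<in>UNIV. norm (U $ i))"
      unfolding norm_vec_def by (rule L2_set_le_sum) auto
    also have "\<dots> \<le> (\<Sum>i\<in>UNIV. \<Sum>j\<in>UNIV. norm (U $ i $ j))"
      by (intro sum_mono) (simp add: norm_vec_def L2_set_le_sum)
    also have "\<dots> \<le> (\<Sum>i\<in>(UNIV::'n set). \<Sum>j\<in>(UNIV::'n set). 1)"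
      by (intro sum_mono norm_unitary_entry_le_1 that)
    finally show ?thesis
      by simp
  qed
  then show ?thesis
    by (auto simp: bounded_iff)
qed

lemma compact_unitary_group: "compact unitary_group"
  by (simp add: compact_eq_bounded_closed closed_unitary_group bounded_unitary_group)

lemma matrix_inv_unitary:
  assumes "V \<in> unitary_group"
  shows "matrix_inv V = adjoint_mat V"
proof -
  have "\<exists>A'. V ** A' = mat 1 \<and> A' ** V = mat 1"
    using assms unitary_mult_adjoint_mat by (auto simp: unitary_group_iff)
  then have "V ** matrix_inv V = mat 1"
    unfolding matrix_inv_def by (rule someI2_ex) blast
  then have "adjoint_mat V ** (V ** matrix_inv V) = adjoint_mat V"
    by simp
  then show ?thesis
    using assms by (simp add: matrix_mul_assoc unitary_group_iff)
qed

lemma continuous_on_adjoint_mat_mult: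
  "continuous_on UNIV (\<lambda>(V, U). adjoint_mat V ** (U :: complex^'n::finite^'n))"
  unfolding matrix_matrix_mult_def adjoint_mat_def case_prod_beta
  by (intro continuous_intros)

lemma continuous_on_compose_adjoint_mat_mult:
  assumes "continuous_on UNIV f"
  shows "continuous_on UNIV (\<lambda>(V, U). f (adjoint_mat V ** (U :: complex^'n::finite^'n)))"
  using continuous_on_compose2[OF assms continuous_on_adjoint_mat_mult] by (simp add: case_prod_beta)

lemma borel_measurable_adjoint_mat_mult:
  assumes "continuous_on UNIV f"
  shows "(\<lambda>V. f (adjoint_mat V ** (U :: complex^'n::finite^'n))) \<in> borel_measurable borel"
proof -
  have "continuous_on UNIV (\<lambda>V. (V, U))"
    by (intro continuous_intros)
  from continuous_on_compose2[OF continuous_on_compose_adjoint_mat_mult[OF assms] this]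
  show ?thesis
    by (auto intro: borel_measurable_continuous_onI)
qed

section \<open>Polynomials on the unitary group\<close>

definition unitary_polys :: "nat \<Rightarrow> (complex^'n::finite^'n \<Rightarrow> complex) set" where
  "unitary_polys s = {f. \<exists>A. \<forall>V\<in>unitary_group. f V = tr_tensor s A V}"

lemma unitary_polys_cong:
  "(\<And>V. V \<in> unitary_group \<Longrightarrow> f V = g V) \<Longrightarrow> g \<in> unitary_polys s \<Longrightarrow>
    f \<in> unitary_polys s"
  by (auto simp: unitary_polys_def)

lemma unitary_polys_zero: "(\<lambda>_. 0) \<in> unitary_polys s"
  by (auto simp: unitary_polys_def tr_tensor_def intro!: exI[of _ "\<lambda>_ _. 0"])

lemma unitary_polys_add:
  assumes "f \<in> unitary_polys s" "g \<in> unitary_polys s"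
  shows "(\<lambda>V. f V + g V) \<in> unitary_polys s"
proof -
  obtain A B where "\<forall>V\<in>unitary_group. f V = tr_tensor s A V"
    and "\<forall>V\<in>unitary_group. g V = tr_tensor s B V"
    using assms by (auto simp: unitary_polys_def)
  then show ?thesis
    unfolding unitary_polys_def
    by (intro CollectI exI[of _ "\<lambda>x y. A x y + B x y"])
      (simp add: tr_tensor_def distrib_right sum.distrib)
qed

lemma unitary_polys_scale:
  assumes "f \<in> unitary_polys s"
  shows "(\<lambda>V. c * f V) \<in> unitary_polys s"
proof -
  obtain A where "\<forall>V\<in>unitary_group. f V = tr_tensor s A V"
    using assms by (auto simp: unitary_polys_def)
  then show ?thesis
    unfolding unitary_polys_def
    by (intro CollectI exI[of _ "\<lambda>x y. c * A x y"])
      (simp add: tr_tensor_def sum_distrib_left mult.assoc)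
qed

lemma unitary_polys_sum:
  "finite S \<Longrightarrow> (\<And>x. x \<in> S \<Longrightarrow> f x \<in> unitary_polys s) \<Longrightarrow>
    (\<lambda>V. \<Sum>x\<in>S. f x V) \<in> unitary_polys s"
  by (induction S rule: finite_induct) (simp_all add: unitary_polys_zero unitary_polys_add)

lemma finite_multi_idx [simp]: "finite (multi_idx s :: (nat \<Rightarrow> 'n::finite) set)"
  by (simp add: multi_idx_def finite_PiE)

lemma unitary_polys_monomial:
  fixes I J K L :: "nat \<Rightarrow> 'n::finite"
  assumes "I \<in> multi_idx s" "J \<in> multi_idx s" "K \<in> multi_idx s" "L \<in> multi_idx s"
  shows "(\<lambda>V. tens_entry s V I J * cnj (tens_entry s V K L)) \<in> unitary_polys s"
  unfolding unitary_polys_def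
proof (intro CollectI exI ballI)
  fix V :: "complex^'n^'n"
  show "tens_entry s V I J * cnj (tens_entry s V K L) =
      tr_tensor s (\<lambda>(J', L') (I', K').
        if L' = L then if J' = J then if K' = K then if I' = I then 1 else 0 else 0 else 0 else 0) V"
    unfolding tr_tensor_def using assms
    by (simp add: if_distrib[of "\<lambda>x. x * _"] sum.delta' cong: if_cong)
qed

lemma tens_entry_Suc:
  "tens_entry (Suc s) V (I(s := a)) (J(s := b)) = tens_entry s V I J * V $ a $ b"
proof -
  have "(\<Prod>m<s. V $ (I(s := a)) m $ (J(s := b)) m) = (\<Prod>m<s. V $ I m $ J m)"
    by (intro prod.cong) auto
  then show ?thesis
    by (simp add: tens_entry_def)
qed

lemma multi_idx_upd: "I \<in> multi_idx s \<Longrightarrow> I(s := a) \<in> multi_idx (Suc s)"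
  by (auto simp: multi_idx_def PiE_iff extensional_def)

lemma unitary_polys_mult_entries:
  assumes "f \<in> unitary_polys s"
  shows "(\<lambda>V. f V * (V $ a $ b * cnj (V $ c $ e))) \<in> unitary_polys (Suc s)"
proof -
  obtain A where A: "\<forall>V\<in>unitary_group. f V = tr_tensor s A V"
    using assms by (auto simp: unitary_polys_def)
  let ?g = "\<lambda>V. \<Sum>I\<in>multi_idx s. \<Sum>K\<in>multi_idx s. \<Sum>J\<in>multi_idx s. \<Sum>L\<in>multi_idx s.
      A (J, L) (I, K) *
        (tens_entry (Suc s) V (I(s := a)) (J(s := b)) *
         cnj (tens_entry (Suc s) V (K(s := c)) (L(s := e))))"
  show ?thesis
  proof (rule unitary_polys_cong)
    show "f V * (V $ a $ b * cnj (V $ c $ e)) = ?g V" if "V \<in> unitary_group" for V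
      using A that
      by (simp add: tr_tensor_def sum_distrib_right tens_entry_Suc, intro sum.cong refl)
        (simp add: mult_ac)
    show "?g \<in> unitary_polys (Suc s)"
      by (intro unitary_polys_sum unitary_polys_scale unitary_polys_monomial multi_idx_upd
          finite_multi_idx)
  qed
qed

text \<open>Multiplying by \<open>\<Sum>\<^sub>k |V\<^sub>k\<^sub>j|\<^sup>2 = 1\<close> raises the degree on the unitary group.\<close>

lemma unitary_polys_Suc:
  assumes "f \<in> unitary_polys s"
  shows "f \<in> unitary_polys (Suc s)"
proof (rule unitary_polys_cong)
  fix j
  show "f V = (\<Sum>k\<in>UNIV. f V * (V $ k $ j * cnj (V $ k $ j)))" if "V \<in> unitary_group" for V
    using unitary_column_sum[OF that, of j] by (simp add: sum_distrib_left[symmetric] mult_ac)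
  show "(\<lambda>V. \<Sum>k\<in>UNIV. f V * (V $ k $ j * cnj (V $ k $ j))) \<in> unitary_polys (Suc s)"
    by (intro unitary_polys_sum unitary_polys_mult_entries assms finite)
qed

lemma unitary_polys_mono: "s \<le> t \<Longrightarrow> f \<in> unitary_polys s \<Longrightarrow> f \<in> unitary_polys t"
  by (induction t rule: dec_induct) (simp_all add: unitary_polys_Suc)

lemma tens_entry_adjoint_mat_mult:
  "tens_entry s (adjoint_mat V ** U) I J =
     (\<Sum>P\<in>multi_idx s. cnj (tens_entry s V P I) * tens_entry s U P J)"
proof -
  have "tens_entry s (adjoint_mat V ** U) I J = (\<Prod>m<s. \<Sum>k\<in>UNIV. cnj (V $ k $ I m) * U $ k $ J m)"
    by (simp add: tens_entry_def matrix_matrix_mult_def)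
  also have "\<dots> = (\<Sum>P\<in>multi_idx s. \<Prod>m<s. cnj (V $ P m $ I m) * U $ P m $ J m)"
    unfolding multi_idx_def atLeast0LessThan by (rule prod_sum_PiE) auto
  also have "\<dots> = (\<Sum>P\<in>multi_idx s. cnj (tens_entry s V P I) * tens_entry s U P J)"
    by (simp add: tens_entry_def prod.distrib cnj_prod)
  finally show ?thesis .
qed

lemma tr_tensor_adjoint_mat_mult_unitary_polys:
  "(\<lambda>V. tr_tensor s A (adjoint_mat V ** U)) \<in> unitary_polys s"
proof -
  let ?g = "\<lambda>V. \<Sum>I\<in>multi_idx s. \<Sum>K\<in>multi_idx s. \<Sum>J\<in>multi_idx s. \<Sum>L\<in>multi_idx s.
      \<Sum>Q\<in>multi_idx s. \<Sum>P\<in>multi_idx s.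
        (A (J, L) (I, K) * tens_entry s U P J * cnj (tens_entry s U Q L)) *
        (tens_entry s V Q K * cnj (tens_entry s V P I))"
  have "tr_tensor s A (adjoint_mat V ** U) = ?g V" for V
    by (simp add: tr_tensor_def tens_entry_adjoint_mat_mult sum_distrib_left sum_distrib_right mult_ac)
  moreover have "?g \<in> unitary_polys s"
    by (intro unitary_polys_sum unitary_polys_scale unitary_polys_monomial finite_multi_idx)
  ultimately show ?thesis
    by (rule unitary_polys_cong)
qed

lemma module_fun_scale: "module (\<lambda>(c::complex) (f::'a \<Rightarrow> complex) x. c * f x)"
  by unfold_locales (auto simp: fun_eq_iff algebra_simps)

lemma H_space_subset_subspace:
  assumes "module.subspace (\<lambda>c f x. c * f x) S" "\<And>s A. s \<le> t \<Longrightarrow> tr_tensor s A \<in> S"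
  shows "H_space t \<subseteq> S"
  unfolding H_space_def using assms by (intro module.span_minimal[OF module_fun_scale]) auto

lemma continuous_on_tr_tensor: "continuous_on UNIV (tr_tensor s A)"
  unfolding tr_tensor_def tens_entry_def by (intro continuous_intros)

lemma continuous_on_H_space:
  assumes "f \<in> H_space t"
  shows "continuous_on UNIV f"
proof -
  have "H_space t \<subseteq> {f :: complex^'n::finite^'n \<Rightarrow> complex. continuous_on UNIV f}"
  proof (rule H_space_subset_subspace)
    show "module.subspace (\<lambda>c f x. c * f x) {f :: complex^'n^'n \<Rightarrow> complex. continuous_on UNIV f}"
      by (auto simp: module.subspace_def[OF module_fun_scale] zero_fun_def plus_fun_def
          intro!: continuous_intros)
    show "tr_tensor s A \<in> {f. continuous_on UNIV f}" for s A
      by (simp add: continuous_on_tr_tensor)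
  qed
  then show ?thesis
    using assms by blast
qed

lemma H_space_adjoint_mat_mult_unitary_polys:
  fixes U :: "complex^'n::finite^'n"
  assumes "f \<in> H_space t"
  shows "(\<lambda>V. f (adjoint_mat V ** U)) \<in> unitary_polys t"
proof -
  let ?S = "{f. (\<lambda>V. f (adjoint_mat V ** U)) \<in> unitary_polys t}"
  have "H_space t \<subseteq> ?S"
  proof (rule H_space_subset_subspace)
    show "module.subspace (\<lambda>c f x. c * f x) ?S"
      by (auto simp: module.subspace_def[OF module_fun_scale] zero_fun_def plus_fun_def
          intro!: unitary_polys_zero unitary_polys_add unitary_polys_scale)
    show "tr_tensor s A \<in> ?S" if "s \<le> t" for s A
      using unitary_polys_mono[OF that tr_tensor_adjoint_mat_mult_unitary_polys] by simp
  qed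
  then show ?thesis
    using assms by blast
qed

lemma AE_prob_on_unitary: "prob_on_unitary M \<Longrightarrow> AE x in M. x \<in> unitary_group"
  unfolding prob_on_unitary_def by (auto intro!: prob_space.AE_prob_1 simp: measure_def)

lemma borel_measurable_prob_on_unitary:
  "prob_on_unitary M \<Longrightarrow> f \<in> borel_measurable borel \<Longrightarrow> f \<in> borel_measurable M"
  unfolding prob_on_unitary_def using measurable_cong_sets by blast

lemma haar_measure_prob_on_unitary: "haar_measure \<mu> \<Longrightarrow> prob_on_unitary \<mu>"
  by (simp add: haar_measure_def prob_on_unitary_def)

lemma integral_eq_on_unitary_group:
  assumes "prob_on_unitary M" "f \<in> borel_measurable borel" "g \<in> borel_measurable borel"
    "\<And>V. V \<in> unitary_group \<Longrightarrow> f V = g V"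
  shows "integral\<^sup>L M f = integral\<^sup>L M g"
proof (rule integral_cong_AE)
  show "f \<in> borel_measurable M" "g \<in> borel_measurable M"
    using assms(1-3) by (simp_all add: borel_measurable_prob_on_unitary)
  show "AE x in M. f x = g x"
    using AE_prob_on_unitary[OF assms(1)] by eventually_elim (rule assms(4))
qed

lemma set_integral_eq_measure:
  fixes f :: "'a \<Rightarrow> complex"
  assumes "\<And>x. x \<in> A \<Longrightarrow> f x = 1"
  shows "(LINT x:A|M. f x) = complex_of_real (measure M (A \<inter> space M))"
proof -
  have "(LINT x:A|M. f x) = (\<integral>x. complex_of_real (indicator A x) \<partial>M)"
    unfolding set_lebesgue_integral_def
    by (intro Bochner_Integration.integral_cong refl) (simp add: indicator_def assms)
  then show ?thesis
    by simp
qed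

lemma exact_design_integral_unitary_polys:
  assumes "prob_on_unitary \<mu>" "prob_on_unitary \<nu>" "exact_design t \<mu> \<nu>"
    and "g \<in> unitary_polys t" "g \<in> borel_measurable borel"
  shows "integral\<^sup>L \<nu> g = integral\<^sup>L \<mu> g"
proof -
  obtain B where B: "\<And>V. V \<in> unitary_group \<Longrightarrow> g V = tr_tensor t B V"
    using assms(4) by (auto simp: unitary_polys_def)
  show ?thesis
    using integral_eq_on_unitary_group[OF _ assms(5)
        borel_measurable_continuous_onI[OF continuous_on_tr_tensor] B] assms(1-3)
    by (simp add: exact_design_def)
qed

lemma integrable_continuous_AE_compact:
  fixes f :: "'a::topological_space \<Rightarrow> 'b::{banach, second_countable_topology}"
  assumes "finite_measure M" "f \<in> borel_measurable M" "continuous_on K f" "compact K"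
    and "AE x in M. x \<in> K"
  shows "integrable M f"
proof -
  obtain B where "\<forall>x\<in>K. norm (f x) \<le> B"
    using compact_imp_bounded[OF compact_continuous_image[OF assms(3,4)]] by (auto simp: bounded_iff)
  then have "AE x in M. norm (f x) \<le> B"
    using assms(5) by auto
  then show ?thesis
    using assms(1,2) by (intro finite_measure.integrable_const_bound) auto
qed

lemma sets_pair_prob_on_unitary: "prob_on_unitary \<mu> \<Longrightarrow> sets (\<mu> \<Otimes>\<^sub>M \<mu>) = sets borel"
  unfolding prob_on_unitary_def by (metis sets_pair_measure_cong borel_prod)

lemma AE_pair_prob_on_unitary:
  assumes \<mu>: "prob_on_unitary \<mu>"
  shows "AE p in \<mu> \<Otimes>\<^sub>M \<mu>. p \<in> unitary_group \<times> unitary_group"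
proof -
  interpret pair_prob_space \<mu> \<mu>
    using \<mu> by (simp add: prob_on_unitary_def pair_prob_space_def pair_sigma_finite_def
        prob_space_imp_sigma_finite)
  show ?thesis
  proof (rule AE_pair_measure)
    have UU: "unitary_group \<times> unitary_group \<in> sets (\<mu> \<Otimes>\<^sub>M \<mu>)"
      using sets_pair_prob_on_unitary[OF \<mu>]
      by (simp add: borel_closed closed_Times closed_unitary_group)
    moreover have "{p \<in> space (\<mu> \<Otimes>\<^sub>M \<mu>). p \<in> unitary_group \<times> unitary_group} =
        unitary_group \<times> unitary_group"
      using sets.sets_into_space[OF UU] by blast
    ultimately show
      "{p \<in> space (\<mu> \<Otimes>\<^sub>M \<mu>). p \<in> unitary_group \<times> unitary_group} \<in> sets (\<mu> \<Otimes>\<^sub>M \<mu>)"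
      by simp
    show "AE x in \<mu>. AE y in \<mu>. (x, y) \<in> unitary_group \<times> unitary_group"
      using AE_prob_on_unitary[OF \<mu>] by eventually_elim (use AE_prob_on_unitary[OF \<mu>] in simp)
  qed
qed

lemma iterated_integrals_eq_on_unitary_group:
  fixes G :: "complex^'n::finite^'n \<Rightarrow> complex^'n^'n \<Rightarrow> complex"
  assumes \<mu>: "prob_on_unitary \<mu>" and G: "continuous_on UNIV (\<lambda>(x, y). G x y)"
    and a: "\<And>x. x \<in> unitary_group \<Longrightarrow> (\<integral>y. G x y \<partial>\<mu>) = a"
    and b: "\<And>y. y \<in> unitary_group \<Longrightarrow> (\<integral>x. G x y \<partial>\<mu>) = b"
  shows "a = b"
proof -
  interpret pair_prob_space \<mu> \<mu>
    using \<mu> by (simp add: prob_on_unitary_def pair_prob_space_def pair_sigma_finite_def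
        prob_space_imp_sigma_finite)
  have borel_pair: "case_prod H \<in> borel_measurable (\<mu> \<Otimes>\<^sub>M \<mu>)"
    if "continuous_on UNIV (case_prod H)" for H :: "_ \<Rightarrow> _ \<Rightarrow> complex"
    using borel_measurable_continuous_onI[OF that] sets_pair_prob_on_unitary[OF \<mu>]
      measurable_cong_sets by blast
  have G_swap: "continuous_on UNIV (\<lambda>(y, x). G x y)"
    using continuous_on_compose2[OF G continuous_on_swap[of UNIV]] by (simp add: case_prod_beta)
  have "integrable (\<mu> \<Otimes>\<^sub>M \<mu>) (\<lambda>(x, y). G x y)"
    using AE_pair_prob_on_unitary[OF \<mu>] finite_measure_axioms
      compact_Times[OF compact_unitary_group compact_unitary_group]
    by (intro integrable_continuous_AE_compact borel_pair continuous_on_subset[OF G]) auto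
  then have "(\<integral>y. \<integral>x. G x y \<partial>\<mu> \<partial>\<mu>) = (\<integral>x. \<integral>y. G x y \<partial>\<mu> \<partial>\<mu>)"
    by (rule Fubini_integral)
  also have "(\<integral>x. \<integral>y. G x y \<partial>\<mu> \<partial>\<mu>) = (\<integral>x. a \<partial>\<mu>)"
    using AE_prob_on_unitary[OF \<mu>] a
    by (intro integral_cong_AE M1.borel_measurable_lebesgue_integral borel_pair G) auto
  also have "(\<integral>y. \<integral>x. G x y \<partial>\<mu> \<partial>\<mu>) = (\<integral>y. b \<partial>\<mu>)"
    using AE_prob_on_unitary[OF \<mu>] b
    by (intro integral_cong_AE M1.borel_measurable_lebesgue_integral borel_pair G_swap) auto
  finally show ?thesis
    by (simp add: M1.prob_space)
qed

section \<open>Haar measure\<close>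

lemma haar_integral_left_mult:
  fixes h :: "complex^'n::finite^'n \<Rightarrow> complex"
  assumes "haar_measure \<mu>" "W \<in> unitary_group" "h \<in> borel_measurable borel"
  shows "(\<integral>V. h (W ** V) \<partial>\<mu>) = integral\<^sup>L \<mu> h"
proof -
  have "(\<lambda>V. W ** V) \<in> borel_measurable borel"
    unfolding matrix_matrix_mult_def by (intro borel_measurable_continuous_onI continuous_intros)
  then have "(\<lambda>V. W ** V) \<in> measurable \<mu> borel"
    using assms(1) measurable_cong_sets unfolding haar_measure_def by blast
  then have "(\<integral>V. h (W ** V) \<partial>\<mu>) = integral\<^sup>L (distr \<mu> borel (\<lambda>V. W ** V)) h"
    using assms(3) by (simp add: integral_distr)
  also have "\<dots> = integral\<^sup>L \<mu> h"
    using assms(1,2) by (simp add: haar_measure_def)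
  finally show ?thesis .
qed

lemma haar_integral_adjoint_mat_mult:
  fixes f :: "complex^'n::finite^'n \<Rightarrow> complex"
  assumes haar: "haar_measure \<mu>" and f: "continuous_on UNIV f" and U: "U \<in> unitary_group"
  shows "(\<integral>V. f (adjoint_mat V ** U) \<partial>\<mu>) = integral\<^sup>L \<mu> f"
proof -
  define c where "c = (\<integral>V. f (adjoint_mat V) \<partial>\<mu>)"
  have const: "(\<integral>V. f (adjoint_mat V ** W) \<partial>\<mu>) = c" if W: "W \<in> unitary_group" for W
  proof -
    have "(\<integral>V. f (adjoint_mat V ** W) \<partial>\<mu>) = (\<integral>V. f (adjoint_mat (W ** V) ** W) \<partial>\<mu>)"
      by (rule haar_integral_left_mult[OF haar W borel_measurable_adjoint_mat_mult[OF f], symmetric])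
    also have "\<dots> = c"
      using W by (simp add: c_def adjoint_mat_mult matrix_mul_assoc[symmetric] unitary_group_iff)
    finally show ?thesis .
  qed
  have "c = integral\<^sup>L \<mu> f"
  proof (rule iterated_integrals_eq_on_unitary_group[where G = "\<lambda>W V. f (adjoint_mat V ** W)"])
    show "prob_on_unitary \<mu>"
      using haar by (rule haar_measure_prob_on_unitary)
    show "continuous_on UNIV (\<lambda>(W, V). f (adjoint_mat V ** W))"
      using continuous_on_compose2[OF continuous_on_compose_adjoint_mat_mult[OF f]
          continuous_on_swap[of UNIV]]
      by (simp add: case_prod_beta)
    show "(\<integral>V. f (adjoint_mat V ** W) \<partial>\<mu>) = c" if "W \<in> unitary_group" for W
      using const[OF that] .
    show "(\<integral>W. f (adjoint_mat V ** W) \<partial>\<mu>) = integral\<^sup>L \<mu> f" if "V \<in> unitary_group" for V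
      using haar_integral_left_mult[OF haar adjoint_mat_unitary[OF that]
          borel_measurable_continuous_onI[OF f]]
      by simp
  qed
  then show ?thesis
    using const[OF U] by simp
qed

section \<open>Measurability of the matrix inverse\<close>

lemma matrix_inv_cramer:
  fixes A :: "'a::field^'n::finite^'n"
  assumes "det A \<noteq> 0"
  shows "matrix_inv A =
    (\<chi> i k. det (\<chi> a j. if j = i then (if a = k then 1 else 0) else A $ a $ j) / det A)"
proof -
  have "\<exists>A'. A ** A' = mat 1 \<and> A' ** A = mat 1"
    using assms by (simp add: invertible_det_nz[symmetric] invertible_def)
  then have inv: "A ** matrix_inv A = mat 1"
    unfolding matrix_inv_def by (rule someI2_ex) blast
  show ?thesis
  proof (intro iffD2[OF vec_eq_iff] allI)
    fix i k
    let ?e = "(\<chi> a. if a = k then 1 else 0) :: 'a^'n"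
    have "A *v (matrix_inv A *v ?e) = ?e"
      by (simp add: matrix_vector_mul_assoc inv)
    then have "matrix_inv A *v ?e = (\<chi> j. det (\<chi> a b. if b = j then ?e $ a else A $ a $ b) / det A)"
      using cramer[OF assms] by blast
    moreover have "(matrix_inv A *v ?e) $ i = matrix_inv A $ i $ k"
      by (simp add: matrix_vector_mult_def if_distrib[of "\<lambda>x. _ * x"] cong: if_cong)
    moreover have "(\<chi> a b. if b = i then ?e $ a else A $ a $ b) =
        (\<chi> a j. if j = i then (if a = k then 1 else 0) else A $ a $ j)"
      by (simp add: vec_eq_iff)
    ultimately show "matrix_inv A $ i $ k =
        (\<chi> i k. det (\<chi> a j. if j = i then (if a = k then 1 else 0) else A $ a $ j) / det A) $ i $ k"
      by simp
  qed
qed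

lemma matrix_inv_singular:
  fixes A :: "'a::field^'n::finite^'n"
  assumes "det A = 0"
  shows "matrix_inv A = (SOME A'. False)"
proof -
  have "\<not> (A ** A' = mat 1 \<and> A' ** A = mat 1)" for A'
    using assms invertible_det_nz invertible_def by metis
  then have "(\<lambda>A'. A ** A' = mat 1 \<and> A' ** A = mat 1) = (\<lambda>_. False)"
    by blast
  then show ?thesis
    unfolding matrix_inv_def by simp
qed

lemma continuous_on_det: "continuous_on S (det :: 'a::real_normed_field^'n::finite^'n \<Rightarrow> 'a)"
  unfolding det_def by (intro continuous_intros)

lemma continuous_on_if_const:
  "continuous_on S f \<Longrightarrow> continuous_on S g \<Longrightarrow> continuous_on S (\<lambda>x. if P then f x else g x)"
  by (cases P) auto

text \<open>
  \<open>T_op\<close> integrates \<open>\<Phi> (matrix_inv V ** U)\<close> over all matrices, not only unitary ones, so the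
  Bochner integral needs measurability of \<open>matrix_inv\<close> on the whole space.
\<close>

lemma borel_measurable_matrix_inv:
  "(matrix_inv :: 'a::real_normed_field^'n::finite^'n \<Rightarrow> _) \<in> borel_measurable borel"
proof -
  let ?G = "{A :: 'a^'n^'n. det A \<noteq> 0}"
  let ?C = "\<lambda>A :: 'a^'n^'n.
    \<chi> i k. det (\<chi> a j. if j = i then (if a = k then 1 else 0) else A $ a $ j) / det A"
  have inv_eq: "matrix_inv = (\<lambda>A. if A \<in> ?G then ?C A else (SOME A'. False))"
    using matrix_inv_cramer matrix_inv_singular by fastforce
  have "open ?G"
    by (rule open_Collect_neq[OF continuous_on_det continuous_on_const])
  moreover have "continuous_on ?G ?C"
  proof -
    have "continuous_on ?G (\<lambda>A :: 'a^'n^'n. \<chi> a j. if j = i then (if a = k then 1 else 0) else A $ a $ j)"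
      for i k
      by (intro continuous_on_vec_lambda continuous_on_if_const continuous_intros)
    then have "continuous_on ?G
        (\<lambda>A :: 'a^'n^'n. det (\<chi> a j. if j = i then (if a = k then 1 else 0) else A $ a $ j))" for i k
      by (rule continuous_on_compose2[OF continuous_on_det]) auto
    then show ?thesis
      by (intro continuous_on_vec_lambda continuous_on_divide continuous_on_det) auto
  qed
  ultimately show ?thesis
    by (subst inv_eq) (intro borel_measurable_continuous_on_if borel_open continuous_on_const)
qed

lemma T_op_unitary:
  fixes \<Phi> :: "complex^'n::finite^'n \<Rightarrow> complex"
  assumes "prob_on_unitary \<nu>" "continuous_on UNIV \<Phi>" "U \<in> unitary_group"
  shows "T_op \<nu> \<Phi> U = (\<integral>V. \<Phi> (adjoint_mat V ** U) \<partial>\<nu>)"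
  unfolding T_op_def
proof (rule integral_eq_on_unitary_group[OF assms(1)])
  have "continuous_on UNIV (\<lambda>W. W ** U)"
    unfolding matrix_matrix_mult_def by (intro continuous_intros)
  then have "continuous_on UNIV (\<lambda>W. \<Phi> (W ** U))"
    by (rule continuous_on_compose2[OF assms(2)]) auto
  then show "(\<lambda>V. \<Phi> (matrix_inv V ** U)) \<in> borel_measurable borel"
    by (intro measurable_compose[OF borel_measurable_matrix_inv] borel_measurable_continuous_onI)
  show "(\<lambda>V. \<Phi> (adjoint_mat V ** U)) \<in> borel_measurable borel"
    by (rule borel_measurable_adjoint_mat_mult[OF assms(2)])
  show "\<Phi> (matrix_inv V ** U) = \<Phi> (adjoint_mat V ** U)" if "V \<in> unitary_group" for V
    using matrix_inv_unitary[OF that] by simp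
qed

theorem lemma1:
  fixes \<mu> \<nu> :: "(complex^'d::finite^'d) measure"
    and \<Phi> :: "complex^'d^'d \<Rightarrow> complex"
    and t :: nat and V :: "complex^'d^'d" and \<epsilon> :: real
  assumes "haar_measure \<mu>"
    and "prob_on_unitary \<nu>"
    and "exact_design t \<mu> \<nu>"
    and "\<Phi> \<in> H_space t"
    and "integral\<^sup>L \<mu> \<Phi> = 1"
    and "V \<in> unitary_group"
    and "0 \<le> \<epsilon>" and "\<epsilon> \<le> 2"
  shows "(LINT U:chan_ball V \<epsilon>|\<mu>. T_op \<nu> \<Phi> U) = complex_of_real (measure \<mu> (chan_ball V \<epsilon>))"
proof -
  have \<mu>: "prob_on_unitary \<mu>"
    using assms(1) by (rule haar_measure_prob_on_unitary)
  have \<Phi>: "continuous_on UNIV \<Phi>"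
    using assms(4) by (rule continuous_on_H_space)
  have T_op_eq_1: "T_op \<nu> \<Phi> U = 1" if U: "U \<in> unitary_group" for U
  proof -
    have "T_op \<nu> \<Phi> U = (\<integral>W. \<Phi> (adjoint_mat W ** U) \<partial>\<nu>)"
      by (rule T_op_unitary[OF assms(2) \<Phi> U])
    also have "\<dots> = (\<integral>W. \<Phi> (adjoint_mat W ** U) \<partial>\<mu>)"
      by (rule exact_design_integral_unitary_polys[OF \<mu> assms(2,3)
            H_space_adjoint_mat_mult_unitary_polys[OF assms(4)] borel_measurable_adjoint_mat_mult[OF \<Phi>]])
    also have "\<dots> = 1"
      using haar_integral_adjoint_mat_mult[OF assms(1) \<Phi> U] assms(5) by simp
    finally show ?thesis .
  qed
  have "(LINT U:chan_ball V \<epsilon>|\<mu>. T_op \<nu> \<Phi> U) =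
      complex_of_real (measure \<mu> (chan_ball V \<epsilon> \<inter> space \<mu>))"
    using T_op_eq_1 by (intro set_integral_eq_measure) (simp add: chan_ball_def)
  moreover have "space \<mu> = UNIV"
    using assms(1) unfolding haar_measure_def by (metis sets_eq_imp_space_eq space_borel)
  ultimately show ?thesis
    by simp
qed

end
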